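(* Let $\mathbb{S}\in\mathbb{Z}^{N_X\times N_e}$, let $\mathbb{V}\in\mathbb{R}^{N_e\times N_z}$ be a matrix whose columns form a basis of $\mathrm{Ker}\,\mathbb{S}$, let $\mathcal{X}=\mathbb{R}^{N_X}_{>0}$, and let $\{\Psi^*_x\}_{x\in\mathcal{X}}$ be a family of dissipation functions on $\mathbb{R}^{N_e}$ with conjugates $\Psi_x$. Fix $x\in\mathcal{X}$ and let the cycle spaces be $\mathcal{Z}_x:=\mathbb{R}^{N_z}$ and $\mathfrak{Z}_x:=\mathrm{Im}\,\mathbb{V}^T=\mathbb{R}^{N_z}$, with the standard pairing. For $\zeta\in\mathfrak{Z}_x$ let $f^\lozenge(x,\zeta)$ be the unique minimizer of $\Psi^*_x(f)$ over $\{f\in\mathbb{R}^{N_e}:\mathbb{V}^Tf=\zeta\}$, and define $$\hat{\Psi}_x(z):=\Psi_x(\mathbb{V}z)\ (z\in\mathcal{Z}_x),\qquad \hat{\Psi}^*_x(\zeta):=\Psi^*_x\big(f^\lozenge(x,\zeta)\big)\ (\zeta\in\mathfrak{Z}_x).$$ Then $\hat{\Psi}_x$ and $\hat{\Psi}^*_x$ are Legendre–Fenchel conjugates of each other, $\hat{\Psi}^*_x(\zeta)=\max_{z}[\langle z,\zeta\rangle-\hat{\Psi}_x(z)]$ and $\hat{\Psi}_x(z)=\max_{\zeta}[\langle z,\zeta\rangle-\hat{\Psi}^*_x(\zeta)]$; their gradients $\nabla\hat{\Psi}_x(z)=\mathbb{V}^T\nabla\Psi_x(\mathbb{V}z)$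 and $\nabla\hat{\Psi}^*_x$ are mutually inverse bijections between $\mathcal{Z}_x$ and $\mathfrak{Z}_x$ (with $\mathbb{V}\nabla\hat\Psi^*_x(\zeta)=\nabla\Psi^*_x(f^\lozenge(x,\zeta))$); and both $\hat{\Psi}_x$ and $\hat{\Psi}^*_x$ are dissipation functions (strictly convex, $1$-coercive, symmetric under sign change, vanishing at $0$). That is, the dissipation functions on the edge spaces induce a dually flat structure on the cycle spaces.
   Context: A dissipation function on $\mathbb{R}^{n}$ is a strictly convex, continuously differentiable, $1$-coercive ($\psi(f)/\|f\|\to\infty$ as $\|f\|\to\infty$), even function $\psi$ with $\psi(0)=0$. $\Psi_x(j):=\max_f[\langle j,f\rangle-\Psi^*_x(f)]$ is the Legendre–Fenchel conjugate of $\Psi^*_x$ (also a dissipation function), and $\nabla\Psi_x,\nabla\Psi^*_x$ are mutually inverse bijections of $\mathbb{R}^{N_e}$. Note $\mathrm{Ker}\,\mathbb{V}=\{0\}$, $\mathrm{Im}\,\mathbb{V}=\mathrm{Ker}\,\mathbb{S}$, $\mathrm{Ker}\,\mathbb{V}^T=\mathrm{Im}\,\mathbb{S}^T$. *)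

theory Defs
  imports "HOL-Analysis.Analysis"
begin

definition strictly_convex :: "('a::real_vector \<Rightarrow> real) \<Rightarrow> bool" where
  "strictly_convex \<psi> \<longleftrightarrow>
     (\<forall>x y t. x \<noteq> y \<longrightarrow> 0 < t \<longrightarrow> t < 1 \<longrightarrow>
        \<psi> ((1 - t) *\<^sub>R x + t *\<^sub>R y) < (1 - t) * \<psi> x + t * \<psi> y)"

definition has_gradient :: "('a::real_inner \<Rightarrow> real) \<Rightarrow> 'a \<Rightarrow> 'a \<Rightarrow> bool" where
  "has_gradient \<psi> g x \<longleftrightarrow> (\<psi> has_derivative (\<lambda>h. g \<bullet> h)) (at x)"

definition grad :: "('a::real_inner \<Rightarrow> real) \<Rightarrow> 'a \<Rightarrow> 'a" where
  "grad \<psi> x = (SOME g. has_gradient \<psi> g x)"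

definition dissipation :: "('a::euclidean_space \<Rightarrow> real) \<Rightarrow> bool" where
  "dissipation \<psi> \<longleftrightarrow>
     strictly_convex \<psi> \<and>
     (\<forall>x. \<exists>g. has_gradient \<psi> g x) \<and> continuous_on UNIV (grad \<psi>) \<and>
     filterlim (\<lambda>f. \<psi> f / norm f) at_top at_infinity \<and>
     (\<forall>f. \<psi> (- f) = \<psi> f) \<and>
     \<psi> 0 = 0"

definition is_max_value :: "('a \<Rightarrow> real) \<Rightarrow> real \<Rightarrow> bool" where
  "is_max_value \<phi> m \<longleftrightarrow> (\<forall>y. \<phi> y \<le> m) \<and> (\<exists>y. \<phi> y = m)"

definition f_diamond :: "(real^'e \<Rightarrow> real) \<Rightarrow> real^'z^'e \<Rightarrow> real^'z \<Rightarrow> real^'e" where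
  "f_diamond \<psi> V \<zeta> =
     (THE f. transpose V *v f = \<zeta> \<and> (\<forall>g. transpose V *v g = \<zeta> \<longrightarrow> \<psi> f \<le> \<psi> g))"

definition columns_basis_of_kernel :: "real^'z^'e \<Rightarrow> int^'e^'X \<Rightarrow> bool" where
  "columns_basis_of_kernel V S \<longleftrightarrow>
     inj (\<lambda>z. V *v z) \<and>
     range (\<lambda>z. V *v z) = {f. (\<chi> i j. real_of_int (S $ i $ j)) *v f = 0}"

end

theory Submission
  imports Defs
begin

(* Fenchel-Young: if V^T (grad Psi (V z)) = zeta, then f = grad Psi (V z) satisfies
   Psi* f = <z, zeta> - Psi (V z), while every g with V^T g = zeta satisfies
   Psi* g >= <V z, g> - Psi (V z) = <z, zeta> - Psi (V z).  Hence f is the constrained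
   minimizer, and the reduced Psi*-hat is the Legendre transform of Psi-hat = Psi o V,
   itself a dissipation function because V is injective.  The remaining claims are the
   general fact that the conjugate of a dissipation function is a dissipation function
   whose gradient inverts the original one. *)

lemma grad_eqI:
  fixes \<psi> :: "'a::euclidean_space \<Rightarrow> real"
  assumes "has_gradient \<psi> g x"
  shows "grad \<psi> x = g"
proof -
  have "has_gradient \<psi> (grad \<psi> x) x"
    unfolding grad_def using assms by (rule someI)
  then have "(\<lambda>h. grad \<psi> x \<bullet> h) = (\<lambda>h. g \<bullet> h)"
    using assms unfolding has_gradient_def by (rule has_derivative_unique)
  then have "(grad \<psi> x - g) \<bullet> (grad \<psi> x - g) = 0"
    by (metis inner_diff_left right_minus_eq)
  then show ?thesis by simp
qed

lemma strictly_convex_imp_convex_on: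
  assumes "strictly_convex \<psi>"
  shows "convex_on UNIV \<psi>"
proof (rule convex_onI)
  fix t x y assume t: "(0::real) < t" "t < 1"
  show "\<psi> ((1 - t) *\<^sub>R x + t *\<^sub>R y) \<le> (1 - t) * \<psi> x + t * \<psi> y"
  proof (cases "x = y")
    case True
    then show ?thesis by (simp flip: scaleR_add_left distrib_right)
  next
    case False
    then show ?thesis using assms t unfolding strictly_convex_def by (meson less_imp_le)
  qed
qed simp

lemma strictly_convex_diff_inner:
  fixes \<phi> :: "'a::real_inner \<Rightarrow> real"
  assumes "strictly_convex \<phi>"
  shows "strictly_convex (\<lambda>y. \<phi> y - j \<bullet> y)"
  unfolding strictly_convex_def
proof (intro allI impI)
  fix x y :: 'a and t :: real
  assume "x \<noteq> y" "0 < t" "t < 1"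
  then have "\<phi> ((1 - t) *\<^sub>R x + t *\<^sub>R y) < (1 - t) * \<phi> x + t * \<phi> y"
    using assms unfolding strictly_convex_def by blast
  moreover have "j \<bullet> ((1 - t) *\<^sub>R x + t *\<^sub>R y) = (1 - t) * (j \<bullet> x) + t * (j \<bullet> y)"
    by (simp add: inner_add_right)
  ultimately show "\<phi> ((1 - t) *\<^sub>R x + t *\<^sub>R y) - j \<bullet> ((1 - t) *\<^sub>R x + t *\<^sub>R y)
      < (1 - t) * (\<phi> x - j \<bullet> x) + t * (\<phi> y - j \<bullet> y)"
    by (simp add: right_diff_distrib)
qed

lemma strictly_convex_minimizer_unique:
  fixes \<phi> :: "'a::real_vector \<Rightarrow> real"
  assumes sc: "strictly_convex \<phi>" and C: "convex C" "f1 \<in> C" "f2 \<in> C"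
    and min1: "\<And>g. g \<in> C \<Longrightarrow> \<phi> f1 \<le> \<phi> g" and min2: "\<And>g. g \<in> C \<Longrightarrow> \<phi> f2 \<le> \<phi> g"
  shows "f1 = f2"
proof (rule ccontr)
  assume "f1 \<noteq> f2"
  define m where "m = (1 - 1/2) *\<^sub>R f1 + (1/2::real) *\<^sub>R f2"
  have "\<forall>x y t. x \<noteq> y \<longrightarrow> 0 < t \<longrightarrow> t < 1 \<longrightarrow>
      \<phi> ((1 - t) *\<^sub>R x + t *\<^sub>R y) < (1 - t) * \<phi> x + t * \<phi> y"
    using sc unfolding strictly_convex_def .
  from this[rule_format, OF \<open>f1 \<noteq> f2\<close>, of "1/2"]
  have "\<phi> m < (1 - 1/2) * \<phi> f1 + (1/2) * \<phi> f2" unfolding m_def by simp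
  moreover have "m \<in> C"
    unfolding m_def using C by (intro convexD) auto
  ultimately show False
    using min1[of f2] min2[of f1] min1[of m] C by simp
qed

lemma convex_on_above_tangent:
  fixes \<phi> :: "'a::real_inner \<Rightarrow> real"
  assumes cv: "convex_on UNIV \<phi>" and g: "has_gradient \<phi> g f"
  shows "\<phi> f + g \<bullet> (y - f) \<le> \<phi> y"
proof -
  define d where "d = y - f"
  define k where "k = (\<lambda>t::real. \<phi> (f + t *\<^sub>R d))"
  have "convex_on UNIV k"
  proof (rule convex_onI)
    fix t a b :: real assume t: "0 < t" "t < 1"
    have "f + ((1 - t) * a + t * b) *\<^sub>R d = (1 - t) *\<^sub>R (f + a *\<^sub>R d) + t *\<^sub>R (f + b *\<^sub>R d)"
      by (simp add: algebra_simps)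
    then show "k ((1 - t) *\<^sub>R a + t *\<^sub>R b) \<le> (1 - t) * k a + t * k b"
      unfolding k_def using convex_onD[OF cv, of t] t by simp
  qed simp
  moreover have "((\<lambda>t. f + t *\<^sub>R d) has_derivative (\<lambda>t. t *\<^sub>R d)) (at 0)"
    by (auto intro!: derivative_eq_intros)
  from has_derivative_compose[OF this, of \<phi> "\<lambda>h. g \<bullet> h"] g
  have "(k has_field_derivative (g \<bullet> d)) (at 0)"
    unfolding has_gradient_def k_def has_field_derivative_def by (simp add: mult_commute_abs)
  ultimately have "k 1 - k 0 \<ge> (g \<bullet> d) * (1 - 0)"
    by (intro convex_on_imp_above_tangent) auto
  then show ?thesis unfolding k_def d_def by simp
qed

lemma dissipationD:
  assumes "dissipation \<phi>"
  shows dissipation_strictly_convex: "strictly_convex \<phi>"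
    and dissipation_has_gradient: "has_gradient \<phi> (grad \<phi> f) f"
    and dissipation_continuous_grad: "continuous_on UNIV (grad \<phi>)"
    and dissipation_coercive: "filterlim (\<lambda>f. \<phi> f / norm f) at_top at_infinity"
    and dissipation_even: "\<phi> (- f) = \<phi> f"
    and dissipation_zero: "\<phi> 0 = 0"
  using assms unfolding dissipation_def grad_def by (auto intro: someI_ex)

lemma dissipation_continuous:
  assumes "dissipation \<phi>"
  shows "continuous_on UNIV \<phi>"
  using dissipation_has_gradient[OF assms] unfolding has_gradient_def
  by (meson continuous_at_imp_continuous_on has_derivative_continuous)

lemma dissipation_nonneg:
  assumes "dissipation \<phi>"
  shows "0 \<le> \<phi> f"
proof -
  have "\<phi> ((1 - 1/2) *\<^sub>R f + (1/2) *\<^sub>R (- f)) \<le> (1 - 1/2) * \<phi> f + (1/2) * \<phi> (- f)"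
    using convex_onD[OF strictly_convex_imp_convex_on[OF dissipation_strictly_convex[OF assms]],
        of "1/2" f "- f"]
    by simp
  then show ?thesis by (simp add: dissipation_even[OF assms] dissipation_zero[OF assms])
qed

lemma dissipation_maximizer_iff:
  assumes "dissipation \<phi>"
  shows "(\<forall>y. j \<bullet> y - \<phi> y \<le> j \<bullet> f - \<phi> f) \<longleftrightarrow> grad \<phi> f = j"
proof
  have deriv: "((\<lambda>y. j \<bullet> y - \<phi> y) has_derivative (\<lambda>v. (j - grad \<phi> f) \<bullet> v)) (at f)"
    using dissipation_has_gradient[OF assms, of f] unfolding has_gradient_def
    by (auto intro!: derivative_eq_intros simp: inner_diff_left)
  assume "\<forall>y. j \<bullet> y - \<phi> y \<le> j \<bullet> f - \<phi> f"
  with differential_zero_maxmin[OF UNIV_I open_UNIV deriv]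
  have "(\<lambda>v. (j - grad \<phi> f) \<bullet> v) = (\<lambda>v. 0)" by blast
  then have "(j - grad \<phi> f) \<bullet> (j - grad \<phi> f) = 0" by metis
  then show "grad \<phi> f = j" by simp
next
  assume "grad \<phi> f = j"
  show "\<forall>y. j \<bullet> y - \<phi> y \<le> j \<bullet> f - \<phi> f"
  proof
    fix y
    have "\<phi> f + j \<bullet> (y - f) \<le> \<phi> y"
      using convex_on_above_tangent[OF strictly_convex_imp_convex_on[OF
          dissipation_strictly_convex[OF assms]] dissipation_has_gradient[OF assms]]
        \<open>grad \<phi> f = j\<close> by blast
    then show "j \<bullet> y - \<phi> y \<le> j \<bullet> f - \<phi> f"
      unfolding inner_diff_right by linarith
  qed
qed

lemma dissipation_maximizer_exists:
  assumes "dissipation \<phi>"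
  shows "\<exists>f. \<forall>y. j \<bullet> y - \<phi> y \<le> j \<bullet> f - \<phi> f"
proof -
  obtain b where b: "\<And>y. b \<le> norm y \<Longrightarrow> norm j + 1 \<le> \<phi> y / norm y"
    using dissipation_coercive[OF assms]
    unfolding filterlim_at_top eventually_at_infinity by blast
  define R where "R = max b 1"
  have outside: "j \<bullet> y - \<phi> y < 0" if "R \<le> norm y" for y
  proof -
    have "norm y > 0" using that unfolding R_def by auto
    then have "norm j * norm y + norm y \<le> \<phi> y"
      using b[of y] that unfolding R_def by (simp add: pos_le_divide_eq algebra_simps)
    moreover have "j \<bullet> y \<le> norm j * norm y" by (simp add: norm_cauchy_schwarz)
    ultimately show ?thesis using \<open>norm y > 0\<close> by linarith
  qed
  have "continuous_on (cball 0 R) (\<lambda>y. j \<bullet> y - \<phi> y)"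
    by (intro continuous_intros continuous_on_subset[OF dissipation_continuous[OF assms]]) auto
  then obtain f where f: "f \<in> cball 0 R"
    and max: "\<And>y. y \<in> cball 0 R \<Longrightarrow> j \<bullet> y - \<phi> y \<le> j \<bullet> f - \<phi> f"
    using continuous_attains_sup[of "cball 0 R" "\<lambda>y. j \<bullet> y - \<phi> y"] unfolding R_def by auto
  have "0 \<le> j \<bullet> f - \<phi> f"
    using max[of 0] dissipation_zero[OF assms] unfolding R_def by simp
  then have "j \<bullet> y - \<phi> y \<le> j \<bullet> f - \<phi> f" for y
    using max[of y] outside[of y] by (cases "norm y \<le> R") auto
  then show ?thesis by blast
qed

lemma dissipation_bij_grad:
  assumes "dissipation \<phi>"
  shows "bij (grad \<phi>)"
proof (rule bijI)
  show "inj (grad \<phi>)"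
  proof (rule injI)
    fix f1 f2 assume "grad \<phi> f1 = grad \<phi> f2"
    define j where "j = grad \<phi> f1"
    have "\<phi> f - j \<bullet> f \<le> \<phi> g - j \<bullet> g" if "f \<in> {f1, f2}" for f g
    proof -
      have "grad \<phi> f = j"
        using that \<open>grad \<phi> f1 = grad \<phi> f2\<close> by (auto simp: j_def)
      then have "j \<bullet> g - \<phi> g \<le> j \<bullet> f - \<phi> f"
        using dissipation_maximizer_iff[OF assms, of j f] by blast
      then show ?thesis by linarith
    qed
    then show "f1 = f2"
      by (intro strictly_convex_minimizer_unique[OF strictly_convex_diff_inner[OF
            dissipation_strictly_convex[OF assms]], of UNIV]) auto
  qed
  show "surj (grad \<phi>)"
    using dissipation_maximizer_exists[OF assms] dissipation_maximizer_iff[OF assms]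
    by (metis surjI)
qed

locale dissipation_conjugates =
  fixes \<phi> \<psi> :: "'a::euclidean_space \<Rightarrow> real"
  assumes dissipation: "dissipation \<phi>"
    and conjugate: "is_max_value (\<lambda>f. j \<bullet> f - \<phi> f) (\<psi> j)"
begin

lemma fenchel_young: "j \<bullet> f - \<phi> f \<le> \<psi> j"
  using conjugate unfolding is_max_value_def by blast

lemma fenchel_young_eq:
  assumes "grad \<phi> f = j"
  shows "\<psi> j = j \<bullet> f - \<phi> f"
proof -
  obtain y where "j \<bullet> y - \<phi> y = \<psi> j"
    using conjugate unfolding is_max_value_def by blast
  moreover have "j \<bullet> y - \<phi> y \<le> j \<bullet> f - \<phi> f"
    using assms dissipation_maximizer_iff[OF dissipation] by blast
  ultimately show ?thesis using fenchel_young[of j f] by linarith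
qed

lemma fenchel_young_strict:
  assumes "grad \<phi> f \<noteq> j"
  shows "j \<bullet> f - \<phi> f < \<psi> j"
proof -
  obtain y where "j \<bullet> f - \<phi> f < j \<bullet> y - \<phi> y"
    using assms dissipation_maximizer_iff[OF dissipation] by (meson not_le)
  then show ?thesis using fenchel_young[of j y] by linarith
qed

lemma continuous_on_inv_grad: "continuous_on UNIV (inv (grad \<phi>))"
  using continuous_on_inverse_open[OF open_UNIV dissipation_continuous_grad[OF dissipation]]
    dissipation_bij_grad[OF dissipation] by (simp add: bij_is_inj bij_is_surj)

lemma has_gradient_conjugate: "has_gradient \<psi> (inv (grad \<phi>) j) j"
proof -
  define G where "G = inv (grad \<phi>)"
  \<comment> \<open>The two Fenchel-Young inequalities at G j and G y squeeze the first-order remainder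
    between 0 and (y - j) \<bullet> (G y - G j), which is o(norm (y - j)) since G is continuous.\<close>
  have conj_eq: "\<psi> k = k \<bullet> G k - \<phi> (G k)" for k
    using fenchel_young_eq[of "G k" k] dissipation_bij_grad[OF dissipation] unfolding G_def
    by (simp add: bij_is_surj surj_f_inv_f)
  have "norm (\<psi> y - \<psi> j - G j \<bullet> (y - j)) \<le> norm (y - j) * norm (G y - G j)" for y
  proof -
    have "0 \<le> \<psi> y - \<psi> j - G j \<bullet> (y - j)"
      using fenchel_young[of y "G j"] conj_eq[of j] by (simp add: inner_diff_right inner_commute)
    moreover have "\<psi> y - \<psi> j - G j \<bullet> (y - j) \<le> (y - j) \<bullet> (G y - G j)"
      using fenchel_young[of j "G y"] conj_eq[of y] conj_eq[of j]
      by (simp add: inner_diff_right inner_diff_left inner_commute)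
    moreover have "(y - j) \<bullet> (G y - G j) \<le> norm (y - j) * norm (G y - G j)"
      by (rule norm_cauchy_schwarz)
    ultimately show ?thesis by simp
  qed
  then have bound: "norm (\<psi> y - \<psi> j - G j \<bullet> (y - j)) / norm (y - j) \<le> norm (G y - G j) * 1" for y
    by (cases "y = j") (auto simp: divide_le_eq mult.commute)
  have "((\<lambda>y. G y - G j) \<longlongrightarrow> 0) (at j)"
    using continuous_on_inv_grad unfolding G_def
    by (simp add: continuous_on_eq_continuous_at isCont_def LIM_zero)
  then have "((\<lambda>y. norm (\<psi> y - \<psi> j - G j \<bullet> (y - j)) / norm (y - j)) \<longlongrightarrow> 0) (at j)"
    by (rule tendsto_0_le[where K = 1]) (use bound in auto)
  then show ?thesis
    unfolding has_gradient_def has_derivative_iff_norm G_def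
    by (auto intro: bounded_linear_inner_right)
qed

lemma grad_conjugate: "grad \<psi> = inv (grad \<phi>)"
  using grad_eqI[OF has_gradient_conjugate] by blast

lemma grad_conjugate_grad: "grad \<psi> (grad \<phi> f) = f"
  by (simp add: grad_conjugate dissipation_bij_grad[OF dissipation] bij_is_inj)

lemma grad_grad_conjugate: "grad \<phi> (grad \<psi> j) = j"
  by (simp add: grad_conjugate dissipation_bij_grad[OF dissipation] bij_is_surj surj_f_inv_f)

lemma conjugate_eq_grad: "\<psi> j = j \<bullet> grad \<psi> j - \<phi> (grad \<psi> j)"
  using fenchel_young_eq[OF grad_grad_conjugate] .

lemma conjugate_strictly_convex: "strictly_convex \<psi>"
  unfolding strictly_convex_def
proof (intro allI impI)
  fix j1 j2 :: 'a and t :: real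
  assume "j1 \<noteq> j2" "0 < t" "t < 1"
  define jt where "jt = (1 - t) *\<^sub>R j1 + t *\<^sub>R j2"
  define f where "f = grad \<psi> jt"
  have "\<psi> jt = jt \<bullet> f - \<phi> f"
    unfolding f_def by (rule conjugate_eq_grad)
  also have "\<dots> = (1 - t) * (j1 \<bullet> f - \<phi> f) + t * (j2 \<bullet> f - \<phi> f)"
    unfolding jt_def by (simp add: inner_add_left algebra_simps)
  finally have "\<psi> jt = (1 - t) * (j1 \<bullet> f - \<phi> f) + t * (j2 \<bullet> f - \<phi> f)" .
  moreover have "j1 \<bullet> f - \<phi> f \<le> \<psi> j1" "j2 \<bullet> f - \<phi> f \<le> \<psi> j2"
    by (rule fenchel_young)+
  \<comment> \<open>Fenchel-Young is tight only for j = grad \<phi> f, so not for both j1 and j2.\<close>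
  moreover have "j1 \<bullet> f - \<phi> f < \<psi> j1 \<or> j2 \<bullet> f - \<phi> f < \<psi> j2"
    using fenchel_young_strict \<open>j1 \<noteq> j2\<close> by metis
  ultimately show "\<psi> ((1 - t) *\<^sub>R j1 + t *\<^sub>R j2) < (1 - t) * \<psi> j1 + t * \<psi> j2"
    using \<open>0 < t\<close> \<open>t < 1\<close> unfolding jt_def
    by (smt (verit) mult_strict_left_mono mult_left_mono)
qed

lemma conjugate_even: "\<psi> (- j) = \<psi> j"
proof -
  have "\<psi> (- k) \<le> \<psi> k" for k
    using conjugate_eq_grad[of "- k"] fenchel_young[of k "- grad \<psi> (- k)"]
      dissipation_even[OF dissipation] by simp
  from this[of j] this[of "- j"] show ?thesis by simp
qed

lemma conjugate_zero: "\<psi> 0 = 0"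
  using conjugate_eq_grad[of 0] fenchel_young[of 0 0] dissipation_zero[OF dissipation]
    dissipation_nonneg[OF dissipation, of "grad \<psi> 0"] by simp

lemma conjugate_coercive: "filterlim (\<lambda>j. \<psi> j / norm j) at_top at_infinity"
  unfolding filterlim_at_top
proof
  fix Z :: real
  define R where "R = max Z 0 + 1"
  obtain M where M: "\<And>y. y \<in> cball 0 R \<Longrightarrow> \<phi> y \<le> M"
    using continuous_attains_sup[of "cball 0 R" \<phi>]
      continuous_on_subset[OF dissipation_continuous[OF dissipation]]
    unfolding R_def by force
  have "Z \<le> \<psi> j / norm j" if "\<bar>M\<bar> + 1 \<le> norm j" for j
  proof -
    have "norm j > 0" using that by linarith
    define y where "y = (R / norm j) *\<^sub>R j"
    have "norm y = R" "j \<bullet> y = R * norm j"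
      unfolding y_def using \<open>norm j > 0\<close>
      by (simp_all add: R_def power2_norm_eq_inner[symmetric] power2_eq_square)
    then have "R * norm j - M \<le> \<psi> j"
      using fenchel_young[of j y] M[of y] by simp
    then have "(R * norm j - M) / norm j \<le> \<psi> j / norm j"
      using \<open>norm j > 0\<close> by (simp add: divide_right_mono)
    moreover have "(R * norm j - M) / norm j = R - M / norm j"
      using \<open>norm j > 0\<close> by (simp add: field_simps)
    ultimately have "R - M / norm j \<le> \<psi> j / norm j" by simp
    moreover have "M / norm j \<le> 1"
      using that \<open>norm j > 0\<close> by (simp add: divide_le_eq)
    ultimately show ?thesis unfolding R_def by linarith
  qed
  then show "eventually (\<lambda>j. Z \<le> \<psi> j / norm j) at_infinity"
    unfolding eventually_at_infinity by blast
qed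

lemma conjugate_dissipation: "dissipation \<psi>"
  unfolding dissipation_def grad_conjugate
  using conjugate_strictly_convex has_gradient_conjugate continuous_on_inv_grad
    conjugate_coercive conjugate_even conjugate_zero by blast

lemma biconjugate: "is_max_value (\<lambda>j. f \<bullet> j - \<psi> j) (\<phi> f)"
  unfolding is_max_value_def
proof
  show "\<forall>j. f \<bullet> j - \<psi> j \<le> \<phi> f"
    using fenchel_young by (simp add: inner_commute algebra_simps)
  show "\<exists>j. f \<bullet> j - \<psi> j = \<phi> f"
    using fenchel_young_eq[of f "grad \<phi> f"]
    by (intro exI[of _ "grad \<phi> f"]) (simp add: inner_commute)
qed

end

lemma has_gradient_compose_linear:
  fixes L :: "'a::euclidean_space \<Rightarrow> 'b::euclidean_space"
  assumes L: "linear L" and g: "has_gradient \<phi> g (L z)"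
  shows "has_gradient (\<lambda>z. \<phi> (L z)) (adjoint L g) z"
proof -
  have "((\<lambda>z. \<phi> (L z)) has_derivative (\<lambda>h. g \<bullet> L h)) (at z)"
    using has_derivative_compose[OF linear_imp_has_derivative[OF L]] g
    unfolding has_gradient_def .
  moreover have "(\<lambda>h. g \<bullet> L h) = (\<lambda>h. adjoint L g \<bullet> h)"
    using adjoint_clauses(2)[OF L] by simp
  ultimately show ?thesis unfolding has_gradient_def by simp
qed

lemma filterlim_linear_inj_at_infinity:
  fixes L :: "'a::euclidean_space \<Rightarrow> 'b::euclidean_space"
  assumes "linear L" "inj L"
  shows "filterlim L at_infinity at_infinity"
proof -
  obtain B where "B > 0" "\<And>z. B * norm z \<le> norm (L z)"
    using linear_inj_bounded_below_pos[OF assms] by blast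
  then show ?thesis
    unfolding filterlim_at_infinity_conv_norm_at_top
    by (intro filterlim_at_top_mono[OF filterlim_tendsto_pos_mult_at_top[OF tendsto_const
          \<open>B > 0\<close> filterlim_norm_at_top]] always_eventually) auto
qed

lemma dissipation_compose_linear:
  fixes L :: "'a::euclidean_space \<Rightarrow> 'b::euclidean_space"
  assumes diss: "dissipation \<phi>" and L: "linear L" "inj L"
  shows "dissipation (\<lambda>z. \<phi> (L z))"
proof -
  have grad: "grad (\<lambda>z. \<phi> (L z)) = (\<lambda>z. adjoint L (grad \<phi> (L z)))"
    by (intro ext grad_eqI has_gradient_compose_linear[OF L(1) dissipation_has_gradient[OF diss]])
  have "strictly_convex (\<lambda>z. \<phi> (L z))"
    using dissipation_strictly_convex[OF diss] L
    unfolding strictly_convex_def by (simp add: linear_add linear_scale inj_eq)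
  moreover have "continuous_on UNIV (grad (\<lambda>z. \<phi> (L z)))"
    unfolding grad using L(1) adjoint_linear[OF L(1)]
    by (intro continuous_on_compose2[OF linear_continuous_on
          continuous_on_compose2[OF dissipation_continuous_grad[OF diss]]])
      (auto simp: linear_conv_bounded_linear intro: linear_continuous_on)
  moreover have "filterlim (\<lambda>z. \<phi> (L z) / norm z) at_top at_infinity"
  proof -
    obtain B where B: "B > 0" "\<And>z. B * norm z \<le> norm (L z)"
      using linear_inj_bounded_below_pos[OF L] by blast
    have "filterlim (\<lambda>z. B * (\<phi> (L z) / norm (L z))) at_top at_infinity"
      by (intro filterlim_tendsto_pos_mult_at_top[OF tendsto_const \<open>B > 0\<close>]
          filterlim_compose[OF dissipation_coercive[OF diss]]
          filterlim_linear_inj_at_infinity[OF L])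
    moreover have "eventually (\<lambda>z. B * (\<phi> (L z) / norm (L z)) \<le> \<phi> (L z) / norm z) at_infinity"
    proof (intro always_eventually allI)
      fix z
      show "B * (\<phi> (L z) / norm (L z)) \<le> \<phi> (L z) / norm z"
      proof (cases "z = 0")
        case False
        then have "B / norm (L z) \<le> 1 / norm z"
          using B by (simp add: divide_simps mult.commute)
        then have "\<phi> (L z) * (B / norm (L z)) \<le> \<phi> (L z) * (1 / norm z)"
          using mult_left_mono dissipation_nonneg[OF diss] by blast
        then show ?thesis by (simp add: mult.commute)
      qed (simp add: linear_0[OF L(1)])
    qed
    ultimately show ?thesis
      by (rule filterlim_at_top_mono)
  qed
  ultimately show ?thesis
    using diss L(1) has_gradient_compose_linear[OF L(1) dissipation_has_gradient[OF diss]]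
    unfolding dissipation_def by (auto simp: linear_neg linear_0)
qed

context dissipation_conjugates
begin

lemma value_at_grad_conjugate_compose:
  fixes L :: "'b::euclidean_space \<Rightarrow> 'a"
  assumes "linear L"
  shows "\<phi> (grad \<psi> (L z)) = z \<bullet> adjoint L (grad \<psi> (L z)) - \<psi> (L z)"
  using conjugate_eq_grad[of "L z"] adjoint_works[OF assms] by simp

lemma grad_conjugate_compose_minimizes:
  fixes L :: "'b::euclidean_space \<Rightarrow> 'a"
  assumes "linear L" and "adjoint L g = adjoint L (grad \<psi> (L z))"
  shows "\<phi> (grad \<psi> (L z)) \<le> \<phi> g"
  using fenchel_young[of "L z" g] value_at_grad_conjugate_compose[OF assms(1)]
    adjoint_works[OF assms(1), of z g] assms(2) by simp

end

lemma has_gradient_compose_matrix: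
  fixes V :: "real^'z^'e"
  assumes "dissipation \<phi>"
  shows "has_gradient (\<lambda>z. \<phi> (V *v z)) (transpose V *v grad \<phi> (V *v z)) z"
  unfolding adjoint_matrix[symmetric]
  by (intro has_gradient_compose_linear matrix_vector_mul_linear dissipation_has_gradient assms)

lemma f_diamond_grad_conjugate:
  fixes V :: "real^'z^'e" and \<phi> \<psi> :: "real^'e \<Rightarrow> real"
  assumes conj: "dissipation_conjugates \<phi> \<psi>"
    and \<zeta>: "transpose V *v grad \<psi> (V *v z) = \<zeta>"
  shows "\<exists>!f. transpose V *v f = \<zeta> \<and> (\<forall>g. transpose V *v g = \<zeta> \<longrightarrow> \<phi> f \<le> \<phi> g)"
    and "f_diamond \<phi> V \<zeta> = grad \<psi> (V *v z)"
    and "\<phi> (f_diamond \<phi> V \<zeta>) = z \<bullet> \<zeta> - \<psi> (V *v z)"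
proof -
  interpret dissipation_conjugates \<phi> \<psi> by (fact conj)
  have adj: "adjoint ((*v) V) = (*v) (transpose V)"
    using adjoint_matrix by blast
  have min: "transpose V *v grad \<psi> (V *v z) = \<zeta> \<and>
      (\<forall>g. transpose V *v g = \<zeta> \<longrightarrow> \<phi> (grad \<psi> (V *v z)) \<le> \<phi> g)"
    using grad_conjugate_compose_minimizes[OF matrix_vector_mul_linear, of V] adj \<zeta> by auto
  have "convex {f. transpose V *v f = \<zeta>}"
    using convex_linear_vimage[OF matrix_vector_mul_linear convex_singleton, of "transpose V" \<zeta>]
    by (simp add: vimage_def)
  show unique: "\<exists>!f. transpose V *v f = \<zeta> \<and> (\<forall>g. transpose V *v g = \<zeta> \<longrightarrow> \<phi> f \<le> \<phi> g)"
  proof (rule ex1I[of _ "grad \<psi> (V *v z)"])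
    fix f
    assume "transpose V *v f = \<zeta> \<and> (\<forall>g. transpose V *v g = \<zeta> \<longrightarrow> \<phi> f \<le> \<phi> g)"
    then show "f = grad \<psi> (V *v z)"
      using min by (intro strictly_convex_minimizer_unique[OF dissipation_strictly_convex[OF
            dissipation] \<open>convex {f. transpose V *v f = \<zeta>}\<close>]) auto
  qed (fact min)
  show "f_diamond \<phi> V \<zeta> = grad \<psi> (V *v z)"
    unfolding f_diamond_def using the1_equality[OF unique min] .
  then show "\<phi> (f_diamond \<phi> V \<zeta>) = z \<bullet> \<zeta> - \<psi> (V *v z)"
    using value_at_grad_conjugate_compose[OF matrix_vector_mul_linear, of V z] adj \<zeta> by simp
qed

lemma dissipation_conjugates_cycle_space:
  fixes V :: "real^'z^'e" and \<phi> \<psi> :: "real^'e \<Rightarrow> real"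
  assumes conj: "dissipation_conjugates \<phi> \<psi>" and inj: "inj ((*v) V)"
  shows "dissipation_conjugates (\<lambda>z. \<psi> (V *v z)) (\<lambda>\<zeta>. \<phi> (f_diamond \<phi> V \<zeta>))"
proof
  interpret dissipation_conjugates \<phi> \<psi> by (fact conj)
  show diss: "dissipation (\<lambda>z. \<psi> (V *v z))"
    using dissipation_compose_linear[OF conjugate_dissipation matrix_vector_mul_linear inj] .
  have grad: "grad (\<lambda>z. \<psi> (V *v z)) z = transpose V *v grad \<psi> (V *v z)" for z
    by (intro grad_eqI has_gradient_compose_matrix conjugate_dissipation)
  fix \<zeta>
  obtain z where z: "grad (\<lambda>z. \<psi> (V *v z)) z = \<zeta>"
    using dissipation_bij_grad[OF diss] by (metis bij_pointE)
  then have "\<forall>y. \<zeta> \<bullet> y - \<psi> (V *v y) \<le> \<zeta> \<bullet> z - \<psi> (V *v z)"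
    using dissipation_maximizer_iff[OF diss] by blast
  moreover have "transpose V *v grad \<psi> (V *v z) = \<zeta>"
    using z unfolding grad .
  then have "\<phi> (f_diamond \<phi> V \<zeta>) = \<zeta> \<bullet> z - \<psi> (V *v z)"
    using f_diamond_grad_conjugate(3)[OF conj] by (metis inner_commute)
  ultimately show "is_max_value (\<lambda>y. \<zeta> \<bullet> y - \<psi> (V *v y)) (\<phi> (f_diamond \<phi> V \<zeta>))"
    unfolding is_max_value_def by auto
qed

theorem mainTheorem12:
  fixes S :: "int^'e^'X"
    and V :: "real^'z^'e"
    and Psi_star Psi :: "real^'X \<Rightarrow> real^'e \<Rightarrow> real"
    and x :: "real^'X"
  assumes V_basis: "columns_basis_of_kernel V S"
    and diss: "\<And>y. (\<forall>i. 0 < y $ i) \<Longrightarrow> dissipation (Psi_star y)"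
    and conj: "\<And>y j. (\<forall>i. 0 < y $ i) \<Longrightarrow>
                 is_max_value (\<lambda>f. j \<bullet> f - Psi_star y f) (Psi y j)"
    and x_pos: "\<forall>i. 0 < x $ i"
  defines "Psi_hat \<equiv> (\<lambda>z. Psi x (V *v z))"
    and "Psi_star_hat \<equiv> (\<lambda>\<zeta>. Psi_star x (f_diamond (Psi_star x) V \<zeta>))"
  shows "(\<forall>\<zeta>. \<exists>!f. transpose V *v f = \<zeta> \<and>
                 (\<forall>g. transpose V *v g = \<zeta> \<longrightarrow> Psi_star x f \<le> Psi_star x g))
      \<and> (\<forall>\<zeta>. is_max_value (\<lambda>z. z \<bullet> \<zeta> - Psi_hat z) (Psi_star_hat \<zeta>))
      \<and> (\<forall>z. is_max_value (\<lambda>\<zeta>. z \<bullet> \<zeta> - Psi_star_hat \<zeta>) (Psi_hat z))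
      \<and> (\<forall>z. has_gradient Psi_hat (transpose V *v grad (Psi x) (V *v z)) z)
      \<and> (\<forall>\<zeta>. has_gradient Psi_star_hat (grad Psi_star_hat \<zeta>) \<zeta>)
      \<and> (\<forall>\<zeta>. V *v grad Psi_star_hat \<zeta> = grad (Psi_star x) (f_diamond (Psi_star x) V \<zeta>))
      \<and> bij (grad Psi_hat) \<and> bij (grad Psi_star_hat)
      \<and> (\<forall>z. grad Psi_star_hat (grad Psi_hat z) = z)
      \<and> (\<forall>\<zeta>. grad Psi_hat (grad Psi_star_hat \<zeta>) = \<zeta>)
      \<and> dissipation Psi_hat \<and> dissipation Psi_star_hat"
proof -
  interpret edge: dissipation_conjugates "Psi_star x" "Psi x"
    using diss conj x_pos by unfold_locales
  have inj: "inj ((*v) V)"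
    using V_basis unfolding columns_basis_of_kernel_def by simp
  interpret cycle: dissipation_conjugates Psi_hat Psi_star_hat
    unfolding Psi_hat_def Psi_star_hat_def
    by (rule dissipation_conjugates_cycle_space[OF edge.dissipation_conjugates_axioms inj])
  have grad_Psi_hat: "has_gradient Psi_hat (transpose V *v grad (Psi x) (V *v z)) z" for z
    unfolding Psi_hat_def by (rule has_gradient_compose_matrix[OF edge.conjugate_dissipation])
  have fibre: "transpose V *v grad (Psi x) (V *v grad Psi_star_hat \<zeta>) = \<zeta>" for \<zeta>
    using cycle.grad_grad_conjugate grad_eqI[OF grad_Psi_hat] by metis
  note f_diamond = f_diamond_grad_conjugate[OF edge.dissipation_conjugates_axioms fibre]
  show ?thesis
    using f_diamond(1) cycle.conjugate cycle.biconjugate grad_Psi_hat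
      dissipation_has_gradient[OF cycle.conjugate_dissipation]
      f_diamond(2) edge.grad_grad_conjugate
      dissipation_bij_grad[OF cycle.dissipation] dissipation_bij_grad[OF cycle.conjugate_dissipation]
      cycle.grad_conjugate_grad cycle.grad_grad_conjugate
      cycle.dissipation cycle.conjugate_dissipation
    by (simp add: inner_commute)
qed

end
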